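(* Let $d\ge2$ and let $N_1,\dots,N_d$ be positive integers. With $\mathbf{N}=(N_1,\dots,N_d)$ and $\mathbf{N}'=(N_1,\dots,N_{d-1})$, \[ \operatorname{disc}(\mathcal{A}_{\mathbf{N}})\le\max\Big(\operatorname{disc}(\mathcal{A}_{\mathbf{N}'}),\sqrt{6N_d\log(2N_1\cdots N_d)}\Big). \]
   Context: $[N]=\{1,\dots,N\}$; $\log$ is the natural logarithm. An arithmetic progression in $k$ dimensions is a set $\{\mathbf{a}+i\mathbf{b}: i=0,\dots,l-1\}$ with $\mathbf{a},\mathbf{b}\in\mathbb{Z}^k$, $\mathbf{b}\ne\mathbf{0}$, $l\in\mathbb{N}$. For $\mathbf{M}=(M_1,\dots,M_k)$, $\mathcal{A}_{\mathbf{M}}$ is the family of arithmetic progressions in $k$ dimensions contained in $\Omega=[M_1]\times\cdots\times[M_k]$, and $\operatorname{disc}(\mathcal{A}_{\mathbf{M}})=\min_{\chi:\Omega\to\{1,-1\}}\max_{A\in\mathcal{A}_{\mathbf{M}}}|\sum_{x\in A}\chi(x)|$. *)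

theory Defs
  imports "HOL-Analysis.Analysis"
begin

text \<open>Points of Z^k are represented as integer lists of length k.
  The grid [M_1] x ... x [M_k] for M = [M_1,...,M_k]:\<close>
definition grid :: "nat list \<Rightarrow> int list set" where
  "grid M = {x. length x = length M \<and> (\<forall>i<length M. 1 \<le> x ! i \<and> x ! i \<le> int (M ! i))}"

definition arith_prog :: "int list \<Rightarrow> int list \<Rightarrow> nat \<Rightarrow> int list set" where
  "arith_prog a b l = {map2 (+) a (map (\<lambda>c. int i * c) b) | i. i < l}"

definition AP_family :: "nat list \<Rightarrow> int list set set" where
  "AP_family M = {arith_prog a b l | a b l.
      length a = length M \<and> length b = length M \<and> b \<noteq> replicate (length M) 0 \<and>
      l \<ge> 1 \<and> arith_prog a b l \<subseteq> grid M}"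

definition disc :: "nat list \<Rightarrow> real" where
  "disc M = (INF col\<in>{col. \<forall>x\<in>grid M. (col :: int list \<Rightarrow> int) x \<in> {1, -1}}.
               (SUP A\<in>AP_family M. real_of_int \<bar>\<Sum>x\<in>A. col x\<bar>))"

end

theory Submission
  imports Defs "HOL-Probability.Hoeffding"
begin

text \<open>Extend a colouring \<open>\<chi>'\<close> of the \<open>(d-1)\<close>-dimensional grid to \<open>\<chi>(x', t) = \<chi>'(x') \<sigma>(t)\<close>
  with signs \<open>\<sigma> : [N\<^sub>d] \<rightarrow> {-1, 1}\<close>. A progression with constant last coordinate is, up to the
  sign \<open>\<sigma>(t)\<close>, a progression of the smaller grid. Any other progression meets each hyperplane
  \<open>x\<^sub>d = t\<close> at most once, so its sum is a Rademacher sum with at most \<open>N\<^sub>d\<close> unit coefficients;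
  by the Chernoff bound it exceeds \<open>B = sqrt (6 N\<^sub>d log (2P))\<close>, \<open>P = N\<^sub>1\<cdots>N\<^sub>d\<close>, for at most a
  fraction \<open>1/(4P\<^sup>3)\<close> of the sign vectors. As there are at most \<open>P\<^sup>3\<close> progressions, some \<open>\<sigma>\<close>
  is good for all of them.\<close>

section \<open>Rademacher sums\<close>

lemma cosh_le_exp_half_square:
  fixes x :: real
  shows "cosh x \<le> exp (x\<^sup>2 / 2)"
proof -
  define y where "y = \<bar>x\<bar>"
  \<comment> \<open>Hoeffding's lemma for a fair coin with values \<open>0\<close> and \<open>2 y\<close>\<close>
  have "-(2 * y) * (1/2) + ln (1 + (1/2) * (exp (2 * y) - 1)) \<le> (2 * y)\<^sup>2 / 8"
    by (rule Hoeffdings_lemma_aux) (auto simp: y_def)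
  moreover have "1 + (1/2) * (exp (2 * y) - 1) = exp y * cosh y"
    by (simp add: cosh_def exp_minus field_simps flip: exp_add)
  ultimately have "ln (cosh y) \<le> y\<^sup>2 / 2"
    by (simp add: ln_mult power2_eq_square)
  hence "cosh y \<le> exp (y\<^sup>2 / 2)"
    by (metis exp_le_cancel_iff exp_ln cosh_real_pos)
  thus ?thesis by (cases "x \<ge> 0") (simp_all add: y_def)
qed

lemma sum_exp_rademacher_sum_le:
  fixes w :: "'a \<Rightarrow> real"
  assumes "finite I"
  shows "(\<Sum>\<sigma>\<in>I \<rightarrow>\<^sub>E {-1, 1::int}. exp (h * (\<Sum>t\<in>I. w t * \<sigma> t)))
           \<le> 2 ^ card I * exp (h\<^sup>2 * (\<Sum>t\<in>I. (w t)\<^sup>2) / 2)"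
proof -
  have "(\<Sum>\<sigma>\<in>I \<rightarrow>\<^sub>E {-1, 1::int}. exp (h * (\<Sum>t\<in>I. w t * \<sigma> t)))
      = (\<Sum>\<sigma>\<in>I \<rightarrow>\<^sub>E {-1, 1::int}. \<Prod>t\<in>I. exp (h * w t * \<sigma> t))"
    by (simp add: sum_distrib_left exp_sum[OF assms] mult.assoc)
  also have "\<dots> = (\<Prod>t\<in>I. \<Sum>s\<in>{-1, 1::int}. exp (h * w t * s))"
    by (rule prod_sum_PiE[symmetric]) (use assms in auto)
  also have "\<dots> = (\<Prod>t\<in>I. 2 * cosh (h * w t))"
    by (simp add: cosh_def add.commute add_divide_distrib)
  also have "\<dots> \<le> (\<Prod>t\<in>I. 2 * exp ((h * w t)\<^sup>2 / 2))"
    by (intro prod_mono) (simp add: cosh_le_exp_half_square)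
  also have "\<dots> = 2 ^ card I * exp (h\<^sup>2 * (\<Sum>t\<in>I. (w t)\<^sup>2) / 2)"
    by (simp add: prod.distrib exp_sum[OF assms, symmetric] sum_divide_distrib sum_distrib_left
        power_mult_distrib)
  finally show ?thesis .
qed

lemma card_rademacher_sum_gt_le:
  fixes w :: "'a \<Rightarrow> real"
  assumes "finite I" "L > 0" "B \<ge> 0" "(\<Sum>t\<in>I. (w t)\<^sup>2) \<le> L"
  shows "real (card {\<sigma>\<in>I \<rightarrow>\<^sub>E {-1, 1::int}. B < (\<Sum>t\<in>I. w t * \<sigma> t)})
           \<le> 2 ^ card I * exp (-(B\<^sup>2 / (2 * L)))"
proof -
  define h where "h = B / L"
  define S where "S = {\<sigma>\<in>I \<rightarrow>\<^sub>E {-1, 1::int}. B < (\<Sum>t\<in>I. w t * \<sigma> t)}"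
  have "h \<ge> 0" using assms by (simp add: h_def)
  have "real (card S) * exp (h * B) = (\<Sum>\<sigma>\<in>S. exp (h * B))" by simp
  also have "\<dots> \<le> (\<Sum>\<sigma>\<in>S. exp (h * (\<Sum>t\<in>I. w t * \<sigma> t)))"
    by (intro sum_mono) (use \<open>h \<ge> 0\<close> in \<open>auto simp: S_def intro!: mult_left_mono\<close>)
  also have "\<dots> \<le> (\<Sum>\<sigma>\<in>I \<rightarrow>\<^sub>E {-1, 1::int}. exp (h * (\<Sum>t\<in>I. w t * \<sigma> t)))"
    by (intro sum_mono2 finite_PiE assms(1)) (auto simp: S_def)
  also have "\<dots> \<le> 2 ^ card I * exp (h\<^sup>2 * (\<Sum>t\<in>I. (w t)\<^sup>2) / 2)"
    by (rule sum_exp_rademacher_sum_le[OF assms(1)])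
  also have "\<dots> \<le> 2 ^ card I * exp (h\<^sup>2 * L / 2)"
    using assms(4) by (auto intro!: mult_left_mono divide_right_mono)
  finally have "real (card S) \<le> 2 ^ card I * exp (h\<^sup>2 * L / 2) / exp (h * B)"
    by (simp add: pos_le_divide_eq)
  also have "\<dots> = 2 ^ card I * exp (h\<^sup>2 * L / 2 - h * B)"
    by (simp add: exp_diff)
  also have "h\<^sup>2 * L / 2 - h * B = -(B\<^sup>2 / (2 * L))"
    using assms(2) by (simp add: h_def power2_eq_square field_simps)
  finally show ?thesis unfolding S_def .
qed

lemma card_rademacher_abs_sum_gt_le:
  fixes w :: "'a \<Rightarrow> real"
  assumes "finite I" "L > 0" "B \<ge> 0" "(\<Sum>t\<in>I. (w t)\<^sup>2) \<le> L"
  shows "real (card {\<sigma>\<in>I \<rightarrow>\<^sub>E {-1, 1::int}. B < \<bar>\<Sum>t\<in>I. w t * \<sigma> t\<bar>})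
           \<le> 2 * 2 ^ card I * exp (-(B\<^sup>2 / (2 * L)))"
proof -
  let ?S = "\<lambda>w :: 'a \<Rightarrow> real. {\<sigma>\<in>I \<rightarrow>\<^sub>E {-1, 1::int}. B < (\<Sum>t\<in>I. w t * \<sigma> t)}"
  have "{\<sigma>\<in>I \<rightarrow>\<^sub>E {-1, 1::int}. B < \<bar>\<Sum>t\<in>I. w t * \<sigma> t\<bar>} \<subseteq> ?S w \<union> ?S (\<lambda>t. - w t)"
    by (auto simp: sum_negf)
  hence "card {\<sigma>\<in>I \<rightarrow>\<^sub>E {-1, 1::int}. B < \<bar>\<Sum>t\<in>I. w t * \<sigma> t\<bar>} \<le> card (?S w \<union> ?S (\<lambda>t. - w t))"
    by (rule card_mono[rotated]) (simp add: finite_PiE assms(1))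
  also have "\<dots> \<le> card (?S w) + card (?S (\<lambda>t. - w t))"
    by (rule card_Un_le)
  moreover have "real (card (?S w)) \<le> 2 ^ card I * exp (-(B\<^sup>2 / (2 * L)))"
    by (rule card_rademacher_sum_gt_le[OF assms])
  moreover have "real (card (?S (\<lambda>t. - w t))) \<le> 2 ^ card I * exp (-(B\<^sup>2 / (2 * L)))"
    by (rule card_rademacher_sum_gt_le) (use assms in simp_all)
  ultimately show ?thesis by linarith
qed

lemma card_transversal_sum_gt_le:
  fixes f :: "'b \<Rightarrow> 'a" and g :: "'b \<Rightarrow> real"
  assumes "finite I" "I \<noteq> {}" "inj_on f A" "f ` A \<subseteq> I" "\<forall>x\<in>A. \<bar>g x\<bar> \<le> 1" "B \<ge> 0"
  shows "real (card {\<sigma>\<in>I \<rightarrow>\<^sub>E {-1, 1::int}. B < \<bar>\<Sum>x\<in>A. g x * \<sigma> (f x)\<bar>})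
           \<le> 2 * 2 ^ card I * exp (-(B\<^sup>2 / (2 * real (card I))))"
proof -
  define w where "w t = (if t \<in> f ` A then g (the_inv_into A f t) else 0)" for t
  have "(\<Sum>x\<in>A. g x * \<sigma> (f x)) = (\<Sum>t\<in>I. w t * \<sigma> t)" for \<sigma> :: "'a \<Rightarrow> int"
  proof -
    have "(\<Sum>t\<in>I. w t * \<sigma> t) = (\<Sum>t\<in>f ` A. w t * \<sigma> t)"
      by (rule sum.mono_neutral_right) (use assms(1,4) in \<open>auto simp: w_def\<close>)
    also have "\<dots> = (\<Sum>x\<in>A. g x * \<sigma> (f x))"
      using assms(3) by (simp add: sum.reindex w_def the_inv_into_f_f)
    finally show ?thesis by simp
  qed
  moreover have "(\<Sum>t\<in>I. (w t)\<^sup>2) \<le> (\<Sum>t\<in>I. 1)"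
  proof (intro sum_mono)
    fix t
    show "(w t)\<^sup>2 \<le> 1"
      using assms(3,5) the_inv_into_into[OF assms(3), of t A]
      by (auto simp: w_def abs_square_le_1)
  qed
  moreover have "real (card I) > 0"
    using assms(1,2) by (simp add: card_gt_0_iff)
  ultimately show ?thesis
    using card_rademacher_abs_sum_gt_le[of I "real (card I)" B w] assms(1,6) by simp
qed

section \<open>Grids and arithmetic progressions\<close>

definition ap_point :: "int list \<Rightarrow> int list \<Rightarrow> nat \<Rightarrow> int list" where
  "ap_point a b i = map2 (+) a (map (\<lambda>c. int i * c) b)"

lemma arith_prog_eq_image: "arith_prog a b l = ap_point a b ` {..<l}"
  by (auto simp: arith_prog_def ap_point_def)

lemma length_ap_point: "length a = length b \<Longrightarrow> length (ap_point a b i) = length a"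
  by (simp add: ap_point_def)

lemma nth_ap_point:
  "length a = length b \<Longrightarrow> k < length a \<Longrightarrow> ap_point a b i ! k = a ! k + int i * b ! k"
  by (simp add: ap_point_def)

lemma ap_point_0: "length a = length b \<Longrightarrow> ap_point a b 0 = a"
  by (intro nth_equalityI) (auto simp: length_ap_point nth_ap_point)

lemma ap_point_1: "length a = length b \<Longrightarrow> map2 (-) (ap_point a b 1) a = b"
  by (intro nth_equalityI) (auto simp: length_ap_point nth_ap_point)

lemma last_ap_point:
  assumes "length a = length b" "a \<noteq> []"
  shows "last (ap_point a b i) = last a + int i * last b"
proof -
  have "ap_point a b i \<noteq> []" "b \<noteq> []"
    using assms length_ap_point[OF assms(1), of i] by auto
  thus ?thesis using assms by (simp add: last_conv_nth nth_ap_point length_ap_point)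
qed

lemma butlast_ap_point:
  "length a = length b \<Longrightarrow> butlast (ap_point a b i) = ap_point (butlast a) (butlast b) i"
  by (intro nth_equalityI) (auto simp: length_ap_point nth_ap_point nth_butlast)

lemma inj_ap_point:
  assumes "length a = length b" "b \<noteq> replicate (length b) 0"
  shows "inj (ap_point a b)"
proof (rule injI)
  fix i j assume eq: "ap_point a b i = ap_point a b j"
  obtain k where k: "k < length b" "b ! k \<noteq> 0"
    using assms(2) by (metis in_set_conv_nth replicate_eqI)
  have "a ! k + int i * b ! k = a ! k + int j * b ! k"
    using arg_cong[OF eq, of "\<lambda>x. x ! k"] assms(1) k(1) by (simp add: nth_ap_point)
  thus "i = j" using k(2) by simp
qed

lemma grid_conv_list_all2: "grid M = {x. list_all2 (\<lambda>c n. 1 \<le> c \<and> c \<le> int n) x M}"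
  by (auto simp: grid_def list_all2_conv_all_nth)

lemma grid_Nil: "grid [] = {[]}"
  by (simp add: grid_conv_list_all2)

lemma grid_snoc: "grid (M @ [m]) = (\<lambda>(y, t). y @ [t]) ` (grid M \<times> {1..int m})"
proof (intro equalityI subsetI)
  fix x assume "x \<in> grid (M @ [m])"
  thus "x \<in> (\<lambda>(y, t). y @ [t]) ` (grid M \<times> {1..int m})"
    by (auto simp: grid_conv_list_all2 list_all2_append2 list_all2_Cons2)
next
  fix x assume "x \<in> (\<lambda>(y, t). y @ [t]) ` (grid M \<times> {1..int m})"
  thus "x \<in> grid (M @ [m])"
    by (auto simp: grid_conv_list_all2 list_all2_append list_all2_lengthD)
qed

lemma in_grid_snoc_iff:
  "x \<in> grid (M @ [m]) \<longleftrightarrow> x \<noteq> [] \<and> butlast x \<in> grid M \<and> last x \<in> {1..int m}"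
proof
  assume "x \<in> grid (M @ [m])"
  thus "x \<noteq> [] \<and> butlast x \<in> grid M \<and> last x \<in> {1..int m}"
    by (auto simp: grid_snoc)
next
  assume x: "x \<noteq> [] \<and> butlast x \<in> grid M \<and> last x \<in> {1..int m}"
  hence "x = (\<lambda>(y, t). y @ [t]) (butlast x, last x)" by simp
  with x show "x \<in> grid (M @ [m])" unfolding grid_snoc by blast
qed

lemma finite_grid: "finite (grid M)"
  by (induction M rule: rev_induct) (simp_all add: grid_Nil grid_snoc)

lemma card_grid: "card (grid M) = prod_list M"
proof (induction M rule: rev_induct)
  case (snoc m M)
  have "inj_on (\<lambda>(y, t). y @ [t]) (grid M \<times> {1..int m})"
    by (auto simp: inj_on_def)
  thus ?case using snoc by (simp add: grid_snoc card_image card_cartesian_product)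
qed (simp add: grid_Nil)

lemma AP_family_subset_grid: "A \<in> AP_family M \<Longrightarrow> A \<subseteq> grid M"
  by (auto simp: AP_family_def)

lemma finite_AP_family: "finite (AP_family M)"
  by (rule finite_subset[of _ "Pow (grid M)"]) (auto simp: AP_family_def finite_grid)

lemma AP_family_nonempty:
  assumes "M \<noteq> []" "\<forall>i<length M. M ! i \<ge> 1"
  shows "AP_family M \<noteq> {}"
proof -
  let ?a = "replicate (length M) (1::int)"
  have "arith_prog ?a ?a 1 = {?a}"
    by (simp add: arith_prog_eq_image ap_point_0 lessThan_Suc)
  moreover have "?a \<in> grid M" using assms(2) by (auto simp: grid_def)
  ultimately have "arith_prog ?a ?a 1 \<in> AP_family M"
    unfolding AP_family_def using assms(1)
    by (intro CollectI exI[of _ ?a] exI[of _ 1]) auto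
  thus ?thesis by blast
qed

text \<open>A progression with \<open>b \<noteq> 0\<close> has \<open>l\<close> distinct points, so \<open>l \<le> card (grid M)\<close>; it is
  determined by its first two points (the first one twice if \<open>l = 1\<close>) and \<open>l\<close>.\<close>
lemma card_AP_family_le: "card (AP_family M) \<le> prod_list M ^ 3"
proof -
  let ?G = "grid M" and ?P = "prod_list M"
  let ?ap = "\<lambda>(a, c, l). arith_prog a (map2 (-) c a) l"
  have "AP_family M \<subseteq> ?ap ` (?G \<times> ?G \<times> {1..?P})"
  proof
    fix A assume "A \<in> AP_family M"
    then obtain a b l where A: "A = arith_prog a b l" and lab: "length a = length b"
      and b: "b \<noteq> replicate (length b) 0" and l: "l \<ge> 1" and sub: "A \<subseteq> ?G"
      unfolding AP_family_def by auto
    have A_img: "A = ap_point a b ` {..<l}" by (simp add: A arith_prog_eq_image)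
    have "l = card A"
      using inj_ap_point[OF lab b] by (simp add: A_img card_image inj_on_subset)
    also have "\<dots> \<le> ?P"
      using card_mono[OF finite_grid sub] by (simp add: card_grid)
    finally have "l \<in> {1..?P}" using l by simp
    have "ap_point a b 0 \<in> A" using l by (simp add: A_img)
    hence a: "a \<in> ?G" using sub by (simp add: ap_point_0[OF lab] subsetD)
    show "A \<in> ?ap ` (?G \<times> ?G \<times> {1..?P})"
    proof (cases "l = 1")
      case True
      have "A = ?ap (a, a, l)"
        using lab by (simp add: A_img arith_prog_eq_image True lessThan_Suc ap_point_0)
      thus ?thesis using a \<open>l \<in> {1..?P}\<close> by blast
    next
      case False
      have "ap_point a b 1 \<in> ?G" using sub l False by (auto simp: A_img)
      moreover have "A = ?ap (a, ap_point a b 1, l)"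
        using ap_point_1[OF lab] by (simp add: A)
      ultimately show ?thesis using a \<open>l \<in> {1..?P}\<close> by blast
    qed
  qed
  hence "card (AP_family M) \<le> card (?ap ` (?G \<times> ?G \<times> {1..?P}))"
    by (intro card_mono finite_imageI) (simp_all add: finite_grid)
  also have "\<dots> \<le> card (?G \<times> ?G \<times> {1..?P})"
    by (rule card_image_le) (simp add: finite_grid)
  also have "\<dots> = ?P ^ 3"
    by (simp add: card_cartesian_product card_grid power3_eq_cube)
  finally show ?thesis .
qed

lemma AP_family_snoc_cases:
  assumes "A \<in> AP_family (M @ [m])"
  obtains t where "butlast ` A \<in> AP_family M" "inj_on butlast A" "last ` A = {t}"
    | "inj_on last A"
proof -
  obtain a b l where A: "A = ap_point a b ` {..<l}" and la: "length a = Suc (length M)"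
    and lb: "length b = Suc (length M)" and b: "b \<noteq> replicate (Suc (length M)) 0"
    and l: "l \<ge> 1" and sub: "A \<subseteq> grid (M @ [m])"
    using assms unfolding AP_family_def arith_prog_eq_image by auto
  have lab: "length a = length b" and a: "a \<noteq> []" using la lb by auto
  have last_A: "last (ap_point a b i) = last a + int i * last b" for i
    by (rule last_ap_point[OF lab a])
  show thesis
  proof (cases "last b = 0")
    case True
    have "b \<noteq> []" using lb by auto
    hence "b = butlast b @ [0]" using True append_butlast_last_id[of b] by simp
    hence b': "butlast b \<noteq> replicate (length M) 0"
      using b lb by (auto simp: replicate_append_same[symmetric])
    have A': "butlast ` A = arith_prog (butlast a) (butlast b) l"
      by (simp add: A arith_prog_eq_image image_image butlast_ap_point[OF lab])
    moreover have "butlast ` A \<subseteq> grid M" using sub by (auto simp: in_grid_snoc_iff)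
    ultimately have "butlast ` A \<in> AP_family M"
      unfolding AP_family_def using la lb b' l
      by (intro CollectI exI[of _ "butlast a"] exI[of _ "butlast b"] exI[of _ l]) simp
    moreover have "last ` A = {last a}"
    proof -
      have "last ` A = (\<lambda>i. last a) ` {..<l}"
        by (simp add: A image_image last_A True)
      thus ?thesis using l by (auto intro: image_eqI[where x = 0])
    qed
    moreover have "inj_on butlast A"
    proof (rule inj_onI)
      fix x y assume "x \<in> A" "y \<in> A" "butlast x = butlast y"
      moreover have "x \<noteq> []" "y \<noteq> []"
        using \<open>x \<in> A\<close> \<open>y \<in> A\<close> sub by (auto simp: in_grid_snoc_iff)
      moreover have "last x = last y"
        using \<open>x \<in> A\<close> \<open>y \<in> A\<close> \<open>last ` A = {last a}\<close> by (metis imageI singletonD)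
      ultimately show "x = y" by (metis append_butlast_last_id)
    qed
    ultimately show thesis using that(1) by blast
  next
    case False
    have "inj_on last A" using False by (auto simp: A inj_on_def last_A)
    thus thesis by (rule that(2))
  qed
qed

section \<open>Colourings\<close>

definition colourings :: "nat list \<Rightarrow> (int list \<Rightarrow> int) set" where
  "colourings M = {col. \<forall>x\<in>grid M. col x \<in> {1, -1}}"

definition AP_disc :: "nat list \<Rightarrow> (int list \<Rightarrow> int) \<Rightarrow> real" where
  "AP_disc M col = (SUP A\<in>AP_family M. real_of_int \<bar>\<Sum>x\<in>A. col x\<bar>)"

lemma in_colourings_iff: "col \<in> colourings M \<longleftrightarrow> (\<forall>x\<in>grid M. \<bar>col x\<bar> = 1)"
  by (auto simp: colourings_def abs_if)

lemma disc_eq_INF_AP_disc: "disc M = (INF col\<in>colourings M. AP_disc M col)"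
  by (simp add: disc_def colourings_def AP_disc_def)

lemma abs_sum_le_AP_disc: "A \<in> AP_family M \<Longrightarrow> real_of_int \<bar>\<Sum>x\<in>A. col x\<bar> \<le> AP_disc M col"
  unfolding AP_disc_def by (rule cSUP_upper) (simp_all add: finite_AP_family)

lemma AP_disc_least:
  assumes "AP_family M \<noteq> {}" "\<And>A. A \<in> AP_family M \<Longrightarrow> real_of_int \<bar>\<Sum>x\<in>A. col x\<bar> \<le> C"
  shows "AP_disc M col \<le> C"
  unfolding AP_disc_def using assms by (rule cSUP_least)

lemma disc_le_AP_disc:
  assumes "M \<noteq> []" "\<forall>i<length M. M ! i \<ge> 1" "col \<in> colourings M"
  shows "disc M \<le> AP_disc M col"
proof -
  obtain A where "A \<in> AP_family M" using AP_family_nonempty[OF assms(1,2)] by blast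
  hence "0 \<le> AP_disc M col'" for col'
    using abs_sum_le_AP_disc[of A M col'] by linarith
  hence "bdd_below (AP_disc M ` colourings M)" by (intro bdd_belowI[of _ 0]) auto
  thus ?thesis unfolding disc_eq_INF_AP_disc using assms(3) by (rule cINF_lower)
qed

lemma disc_greatest:
  assumes "\<And>col. col \<in> colourings M \<Longrightarrow> C \<le> AP_disc M col"
  shows "C \<le> disc M"
proof -
  have "(\<lambda>_. 1) \<in> colourings M" by (simp add: colourings_def)
  hence "colourings M \<noteq> {}" by blast
  thus ?thesis unfolding disc_eq_INF_AP_disc using assms by (rule cINF_greatest)
qed

lemma exists_outside_bad_events:
  fixes Bad :: "'i \<Rightarrow> 'a \<Rightarrow> bool"
  assumes "finite S" "finite I" "\<And>i. i \<in> I \<Longrightarrow> real (card {x\<in>S. Bad i x}) \<le> c"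
    and "real (card I) * c < real (card S)"
  shows "\<exists>x\<in>S. \<forall>i\<in>I. \<not> Bad i x"
proof -
  have "real (card (\<Union>i\<in>I. {x\<in>S. Bad i x})) \<le> (\<Sum>i\<in>I. real (card {x\<in>S. Bad i x}))"
    using card_UN_le[OF assms(2), of "\<lambda>i. {x\<in>S. Bad i x}"] by (simp flip: of_nat_sum)
  also have "\<dots> \<le> real (card I) * c"
    using sum_mono[of I _ "\<lambda>_. c"] assms(3) by simp
  finally have "card (\<Union>i\<in>I. {x\<in>S. Bad i x}) < card S"
    using assms(4) by linarith
  hence "(\<Union>i\<in>I. {x\<in>S. Bad i x}) \<noteq> S" by auto
  thus ?thesis by auto
qed

lemma exists_signs_transversal_sums_le:
  assumes "col' \<in> colourings M" "m \<ge> 1" "\<forall>i<length M. M ! i \<ge> 1"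
  defines "B \<equiv> sqrt (6 * real m * ln (2 * real (prod_list (M @ [m]))))"
  shows "\<exists>\<sigma>\<in>{1..int m} \<rightarrow>\<^sub>E {-1, 1::int}. \<forall>A\<in>AP_family (M @ [m]). inj_on last A \<longrightarrow>
           \<bar>\<Sum>x\<in>A. real_of_int (col' (butlast x)) * real_of_int (\<sigma> (last x))\<bar> \<le> B"
proof -
  let ?S = "{1..int m} \<rightarrow>\<^sub>E {-1, 1::int}" and ?T = "{A\<in>AP_family (M @ [m]). inj_on last A}"
  define P where "P = prod_list (M @ [m])"
  have "0 \<notin> set M" using assms(3) by (auto simp: in_set_conv_nth)
  hence "prod_list M \<noteq> 0" by (simp add: prod_list_zero_iff)
  hence "P \<ge> 1" using assms(2) by (simp add: P_def)
  hence "ln (2 * real P) > 0" by simp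
  hence "B\<^sup>2 / (2 * real m) = 3 * ln (2 * real P)"
    using assms(2) by (simp add: B_def P_def)
  also have "\<dots> = ln ((2 * real P) ^ 3)"
    using \<open>P \<ge> 1\<close> by (subst ln_realpow) auto
  finally have exp_B: "exp (-(B\<^sup>2 / (2 * real m))) = 1 / (8 * real P ^ 3)"
    using \<open>P \<ge> 1\<close> by (simp add: exp_minus inverse_eq_divide power_mult_distrib)
  have B: "B \<ge> 0"
    unfolding B_def P_def[symmetric] using \<open>ln (2 * real P) > 0\<close> by simp
  have few_bad: "real (card {\<sigma>\<in>?S. B < \<bar>\<Sum>x\<in>A. real_of_int (col' (butlast x)) * \<sigma> (last x)\<bar>})
          \<le> 2 ^ m / (4 * real P ^ 3)" if "A \<in> ?T" for A
  proof -
    have "butlast x \<in> grid M \<and> last x \<in> {1..int m}" if "x \<in> A" for x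
      using \<open>A \<in> ?T\<close> that AP_family_subset_grid in_grid_snoc_iff by blast
    hence "last ` A \<subseteq> {1..int m}" "\<forall>x\<in>A. \<bar>real_of_int (col' (butlast x))\<bar> \<le> 1"
      using assms(1) by (auto simp: in_colourings_iff simp flip: of_int_abs)
    from card_transversal_sum_gt_le[OF _ _ _ this B] that assms(2)
    show ?thesis by (simp add: exp_B)
  qed
  have few_progressions: "real (card ?T) * (2 ^ m / (4 * real P ^ 3)) < real (card ?S)"
  proof -
    have "card ?T \<le> card (AP_family (M @ [m]))"
      by (intro card_mono finite_AP_family) auto
    also have "\<dots> \<le> P ^ 3" unfolding P_def by (rule card_AP_family_le)
    finally have "real (card ?T) * (2 ^ m / (4 * real P ^ 3)) \<le> real P ^ 3 * (2 ^ m / (4 * real P ^ 3))"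
      by (intro mult_right_mono) (simp_all flip: of_nat_power)
    also have "\<dots> < 2 ^ m" using \<open>P \<ge> 1\<close> by simp
    also have "\<dots> = real (card ?S)" by (simp add: card_PiE)
    finally show ?thesis .
  qed
  have "finite ?S" by (intro finite_PiE) auto
  moreover have "finite ?T" using finite_AP_family by simp
  ultimately obtain \<sigma> where "\<sigma> \<in> ?S"
    and "\<forall>A\<in>?T. \<not> B < \<bar>\<Sum>x\<in>A. real_of_int (col' (butlast x)) * \<sigma> (last x)\<bar>"
    using exists_outside_bad_events[where Bad = "\<lambda>A \<sigma>. B < \<bar>\<Sum>x\<in>A. real_of_int (col' (butlast x)) * real_of_int (\<sigma> (last x))\<bar>",
        OF _ _ few_bad few_progressions]
    by blast
  thus ?thesis by (auto simp: not_less)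
qed

lemma exists_colouring_snoc:
  assumes "col' \<in> colourings M" "m \<ge> 1" "\<forall>i<length M. M ! i \<ge> 1"
  defines "B \<equiv> sqrt (6 * real m * ln (2 * real (prod_list (M @ [m]))))"
  shows "\<exists>col\<in>colourings (M @ [m]). \<forall>A\<in>AP_family (M @ [m]).
           real_of_int \<bar>\<Sum>x\<in>A. col x\<bar> \<le> max (AP_disc M col') B"
proof -
  obtain \<sigma> where \<sigma>: "\<sigma> \<in> {1..int m} \<rightarrow>\<^sub>E {-1, 1::int}"
    and transversal: "\<And>A. A \<in> AP_family (M @ [m]) \<Longrightarrow> inj_on last A \<Longrightarrow>
        \<bar>\<Sum>x\<in>A. real_of_int (col' (butlast x)) * real_of_int (\<sigma> (last x))\<bar> \<le> B"
    using exists_signs_transversal_sums_le[OF assms(1-3)] unfolding B_def by blast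
  have abs_\<sigma>: "\<bar>\<sigma> t\<bar> = 1" if "t \<in> {1..int m}" for t
    using PiE_mem[OF \<sigma> that] by auto
  define col where "col x = col' (butlast x) * \<sigma> (last x)" for x
  have "col \<in> colourings (M @ [m])"
    using assms(1) abs_\<sigma> by (simp add: in_colourings_iff col_def in_grid_snoc_iff abs_mult)
  moreover have "real_of_int \<bar>\<Sum>x\<in>A. col x\<bar> \<le> max (AP_disc M col') B"
    if A: "A \<in> AP_family (M @ [m])" for A
    using A
  proof (cases rule: AP_family_snoc_cases)
    case (1 t)
    obtain x where "x \<in> A" "t = last x" using 1(3) by blast
    hence "t \<in> {1..int m}" using AP_family_subset_grid[OF A] in_grid_snoc_iff by blast
    have "(\<Sum>x\<in>A. col x) = \<sigma> t * (\<Sum>x\<in>A. col' (butlast x))"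
      using 1(3) by (auto simp: col_def sum_distrib_left mult.commute intro!: sum.cong)
    also have "(\<Sum>x\<in>A. col' (butlast x)) = (\<Sum>y\<in>butlast ` A. col' y)"
      using 1(2) by (simp add: sum.reindex)
    finally have "real_of_int \<bar>\<Sum>x\<in>A. col x\<bar> = real_of_int \<bar>\<Sum>y\<in>butlast ` A. col' y\<bar>"
      using abs_\<sigma>[OF \<open>t \<in> {1..int m}\<close>] by (simp add: abs_mult)
    also have "\<dots> \<le> AP_disc M col'"
      by (rule abs_sum_le_AP_disc[OF 1(1)])
    finally show ?thesis by simp
  next
    case 2
    have "real_of_int \<bar>\<Sum>x\<in>A. col x\<bar>
        = \<bar>\<Sum>x\<in>A. real_of_int (col' (butlast x)) * real_of_int (\<sigma> (last x))\<bar>"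
      by (simp add: col_def)
    also have "\<dots> \<le> B" by (rule transversal[OF A 2])
    finally show ?thesis by simp
  qed
  ultimately show ?thesis by blast
qed

lemma disc_snoc_le:
  assumes "m \<ge> 1" "\<forall>i<length M. M ! i \<ge> 1"
  shows "disc (M @ [m]) \<le> max (disc M) (sqrt (6 * real m * ln (2 * real (prod_list (M @ [m])))))"
    (is "_ \<le> max _ ?B")
proof -
  have N: "M @ [m] \<noteq> []" "\<forall>i<length (M @ [m]). (M @ [m]) ! i \<ge> 1"
    using assms by (auto simp: nth_append)
  have "disc (M @ [m]) \<le> max (AP_disc M col') ?B" if col': "col' \<in> colourings M" for col'
  proof -
    obtain col where "col \<in> colourings (M @ [m])"
      and "\<forall>A\<in>AP_family (M @ [m]). real_of_int \<bar>\<Sum>x\<in>A. col x\<bar> \<le> max (AP_disc M col') ?B"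
      using exists_colouring_snoc[OF col' assms] by blast
    hence "AP_disc (M @ [m]) col \<le> max (AP_disc M col') ?B"
      by (intro AP_disc_least AP_family_nonempty[OF N]) auto
    thus ?thesis using disc_le_AP_disc[OF N \<open>col \<in> colourings (M @ [m])\<close>] by linarith
  qed
  hence "disc (M @ [m]) \<le> ?B \<or> disc (M @ [m]) \<le> disc M"
    by (metis disc_greatest le_max_iff_disj)
  thus ?thesis by linarith
qed

theorem lemma6p1:
  fixes N :: "nat list"
  assumes "length N \<ge> 2"
    and "\<forall>i<length N. N ! i \<ge> 1"
  shows "disc N \<le> max (disc (butlast N))
           (sqrt (6 * real (last N) * ln (2 * real (prod_list N))))"
proof -
  have "N \<noteq> []" using assms(1) by auto
  hence N: "N = butlast N @ [last N]" by simp
  have "last N \<ge> 1" using assms \<open>N \<noteq> []\<close> by (simp add: last_conv_nth)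
  moreover have "\<forall>i<length (butlast N). butlast N ! i \<ge> 1"
    using assms(2) by (simp add: nth_butlast)
  ultimately show ?thesis using disc_snoc_le by (metis N)
qed

end
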